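(* Let $\mathcal{X}=\{1,\dots,n\}$, let $\pi$ be a strictly positive probability distribution on $\mathcal{X}$, let $P$ be a $\pi$-reversible transition matrix, let $G$ be the Gibbs kernel induced by some partition of $\mathcal{X}$, and let $A_\alpha=\alpha P+(1-\alpha)G$. Then for every integer $l\geq2$ and every $\alpha\in(0,1)$, $$\|A_\alpha^l-\Pi\|_{F,\pi}^2\leq(1-\alpha\gamma^*(P))^{2(l-1)}\|A_\alpha-\Pi\|_{F,\pi}^2.$$
   Context: $\pi$-reversible means $\pi(x)P(x,y)=\pi(y)P(y,x)$. Gibbs kernel of a partition $\bigsqcup_i\mathcal{O}_i$: $G(x,y)=\pi(y)/\pi(\mathcal{O}(x))$ if $y\in\mathcal{O}(x)$ and $0$ otherwise. $\Pi$ is the matrix with every row equal to $\pi$; $\|M\|_{F,\pi}^2=\operatorname{Tr}(M^*M)$ with $M^*(x,y)=\pi(y)M(y,x)/\pi(x)$. For $\pi$-reversible $P$ with eigenvalues $\lambda_1\ge\dots\ge\lambda_n$, $\gamma^*(P)=1-\max\{|\lambda_2(P)|,|\lambda_n(P)|\}$. *)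

theory Defs
  imports "Jordan_Normal_Form.Char_Poly" "HOL-Library.Multiset" "HOL-Library.Disjoint_Sets"
begin

(* State space X = {0..<n} (0-based indices stand for 1..n).
   \<pi> is a vector of dimension n, matrices are n x n real matrices. *)

definition prob_vec :: "nat \<Rightarrow> real vec \<Rightarrow> bool" where
  "prob_vec n \<pi> \<longleftrightarrow> dim_vec \<pi> = n \<and> (\<forall>i<n. \<pi> $ i > 0) \<and> (\<Sum>i<n. \<pi> $ i) = 1"

definition transition_mat :: "nat \<Rightarrow> real mat \<Rightarrow> bool" where
  "transition_mat n P \<longleftrightarrow> P \<in> carrier_mat n n \<and> (\<forall>i<n. \<forall>j<n. P $$ (i,j) \<ge> 0)
     \<and> (\<forall>i<n. (\<Sum>j<n. P $$ (i,j)) = 1)"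

definition reversible :: "nat \<Rightarrow> real vec \<Rightarrow> real mat \<Rightarrow> bool" where
  "reversible n \<pi> P \<longleftrightarrow> (\<forall>x<n. \<forall>y<n. \<pi> $ x * P $$ (x,y) = \<pi> $ y * P $$ (y,x))"

definition block_of :: "nat set set \<Rightarrow> nat \<Rightarrow> nat set" where
  "block_of Q x = (THE B. B \<in> Q \<and> x \<in> B)"

definition gibbs_kernel :: "nat \<Rightarrow> real vec \<Rightarrow> nat set set \<Rightarrow> real mat" where
  "gibbs_kernel n \<pi> Q = mat n n (\<lambda>(x,y).
      if y \<in> block_of Q x then \<pi> $ y / (\<Sum>z\<in>block_of Q x. \<pi> $ z) else 0)"

definition Pi_mat :: "nat \<Rightarrow> real vec \<Rightarrow> real mat" where
  "Pi_mat n \<pi> = mat n n (\<lambda>(x,y). \<pi> $ y)"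

definition adjoint_pi :: "nat \<Rightarrow> real vec \<Rightarrow> real mat \<Rightarrow> real mat" where
  "adjoint_pi n \<pi> M = mat n n (\<lambda>(x,y). \<pi> $ y * M $$ (y,x) / \<pi> $ x)"

definition mtrace :: "nat \<Rightarrow> real mat \<Rightarrow> real" where
  "mtrace n M = (\<Sum>i<n. M $$ (i,i))"

definition frob_sq :: "nat \<Rightarrow> real vec \<Rightarrow> real mat \<Rightarrow> real" where
  "frob_sq n \<pi> M = mtrace n (adjoint_pi n \<pi> M * M)"

(* eigenvalues with multiplicity, in ascending order: lambda_n first, ..., lambda_1 last *)
definition eigs_asc :: "real mat \<Rightarrow> real list" where
  "eigs_asc P = sorted_list_of_multiset (proots (char_poly P))"

definition lambda2 :: "nat \<Rightarrow> real mat \<Rightarrow> real" where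
  "lambda2 n P = eigs_asc P ! (n - 2)"

definition lambda_min :: "nat \<Rightarrow> real mat \<Rightarrow> real" where
  "lambda_min n P = eigs_asc P ! 0"

definition abs_spectral_gap :: "nat \<Rightarrow> real mat \<Rightarrow> real" where
  "abs_spectral_gap n P = 1 - max \<bar>lambda2 n P\<bar> \<bar>lambda_min n P\<bar>"

end

(* Write Pi for Pi_mat n pi and ||T|| for the operator norm on L2(pi). The mixture A is again a
   pi-reversible transition matrix, so A Pi = Pi A = Pi and A^(k+1) - Pi = (A - Pi) (A^k - Pi).
   Column by column, ||T X||_{F,pi} <= ||T|| ||X||_{F,pi}, hence it suffices to show
   ||A - Pi|| <= 1 - alpha gamma*(P). As A - Pi = alpha (P - Pi) + (1 - alpha) (G - Pi),
   this follows from ||G - Pi|| <= 1, which is Jensen's inequality for the stochastic and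
   pi-stationary G, and from ||P - Pi|| <= max |lambda_2| |lambda_n|. For the latter, P - Pi is
   self-adjoint in L2(pi), so its norm is at most its spectral radius (via the powers
   (P - Pi)^(2^m), as in Gelfand's formula); and deflating the constant eigenvector shows that the
   characteristic polynomials of P and P - Pi are (x - 1) q and x q for one polynomial q, so the
   nonzero eigenvalues of P - Pi lie between lambda_n and lambda_2. *)

theory Submission
  imports Defs "Jordan_Normal_Form.Spectral_Radius" "HOL-Analysis.L2_Norm"
begin

section \<open>Matrix powers and spectral radius\<close>

lemma pow_mat_add:
  assumes "A \<in> carrier_mat n n"
  shows "A ^\<^sub>m (k + l) = A ^\<^sub>m k * A ^\<^sub>m l"
proof (induction l)
  case (Suc l)
  then show ?case
    using assms by (simp add: assoc_mult_mat[of _ n n _ n _ n])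
qed (use assms in simp)

lemma pow_mat_Suc_left:
  assumes "A \<in> carrier_mat n n"
  shows "A ^\<^sub>m Suc k = A * A ^\<^sub>m k"
  using pow_mat_add[OF assms, of 1 k] assms by simp

lemma pow_smult_mat:
  fixes A :: "'a :: comm_ring_1 mat"
  assumes "A \<in> carrier_mat n n"
  shows "(c \<cdot>\<^sub>m A) ^\<^sub>m k = c ^ k \<cdot>\<^sub>m A ^\<^sub>m k"
proof (induction k)
  case (Suc k)
  have "(c \<cdot>\<^sub>m A) ^\<^sub>m Suc k = (c ^ k \<cdot>\<^sub>m A ^\<^sub>m k) * (c \<cdot>\<^sub>m A)"
    using Suc by simp
  also have "\<dots> = c ^ k \<cdot>\<^sub>m (A ^\<^sub>m k * (c \<cdot>\<^sub>m A))"
    using assms by (intro mult_smult_assoc_mat) auto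
  also have "A ^\<^sub>m k * (c \<cdot>\<^sub>m A) = c \<cdot>\<^sub>m (A ^\<^sub>m k * A)"
    using assms by (intro mult_smult_distrib) auto
  finally show ?case by (auto intro!: eq_matI simp: ac_simps)
qed (use assms in \<open>auto intro!: eq_matI\<close>)

lemma smult_mat_mult_vec:
  fixes A :: "'a :: comm_semiring_0 mat"
  assumes "A \<in> carrier_mat nr nc" "v \<in> carrier_vec nc"
  shows "(c \<cdot>\<^sub>m A) *\<^sub>v v = c \<cdot>\<^sub>v (A *\<^sub>v v)"
  using assms by (intro eq_vecI) (auto simp: scalar_prod_def sum_distrib_left ac_simps)

lemma eigenvalue_smult_mat:
  fixes A :: "'a :: field mat"
  assumes A: "A \<in> carrier_mat n n" and "c \<noteq> 0" and ev: "eigenvalue (c \<cdot>\<^sub>m A) e"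
  shows "eigenvalue A (e / c)"
proof -
  obtain v where "eigenvector (c \<cdot>\<^sub>m A) v e"
    using ev unfolding eigenvalue_def by blast
  then have v: "v \<in> carrier_vec n" "v \<noteq> 0\<^sub>v n" and "c \<cdot>\<^sub>v (A *\<^sub>v v) = e \<cdot>\<^sub>v v"
    using A unfolding eigenvector_def by (auto simp: smult_mat_mult_vec)
  then have "(1 / c) \<cdot>\<^sub>v (c \<cdot>\<^sub>v (A *\<^sub>v v)) = (e / c) \<cdot>\<^sub>v v"
    by (simp add: smult_smult_assoc)
  then have "A *\<^sub>v v = (e / c) \<cdot>\<^sub>v v"
    using \<open>c \<noteq> 0\<close> by (simp add: smult_smult_assoc)
  then show ?thesis
    using A v unfolding eigenvalue_def eigenvector_def by auto
qed

lemma spectral_radius_nonneg: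
  assumes "A \<in> carrier_mat n n" "0 < n"
  shows "0 \<le> spectral_radius A"
  using spectral_radius_mem_max(1)[OF assms] by auto

lemma spectral_radius_smult_lt_1:
  fixes A :: "complex mat"
  assumes A: "A \<in> carrier_mat n n" and "0 < n" and sr: "spectral_radius A < \<rho>"
  shows "spectral_radius (of_real (1 / \<rho>) \<cdot>\<^sub>m A) < 1"
proof -
  have \<rho>: "0 < \<rho>"
    using spectral_radius_nonneg[OF A \<open>0 < n\<close>] sr by simp
  have B: "of_real (1 / \<rho>) \<cdot>\<^sub>m A \<in> carrier_mat n n"
    using A by simp
  have "cmod e < 1" if "eigenvalue (of_real (1 / \<rho>) \<cdot>\<^sub>m A) e" for e
  proof -
    have "eigenvalue A (e * of_real \<rho>)"
      using eigenvalue_smult_mat[OF A _ that] \<rho> by simp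
    then have "cmod (e * of_real \<rho>) \<le> spectral_radius A"
      using \<open>0 < n\<close> by (intro spectral_radius_mem_max(2)[OF A]) (auto simp: spectrum_def)
    then have "cmod e * \<rho> \<le> spectral_radius A"
      using \<rho> by (simp add: norm_mult)
    then have "cmod e * \<rho> < 1 * \<rho>"
      using sr by linarith
    then show ?thesis
      using \<rho> by (simp only: mult_less_cancel_right_pos)
  qed
  then show ?thesis
    using spectral_radius_mem_max(1)[OF B \<open>0 < n\<close>] by (auto simp: spectrum_def)
qed

lemma norm_bound_pow_gt_spectral_radius:
  fixes A :: "complex mat"
  assumes A: "A \<in> carrier_mat n n" and sr: "spectral_radius A < \<rho>"
  shows "\<exists>c. \<forall>k. norm_bound (A ^\<^sub>m k) (c * \<rho> ^ k)"
proof (cases "n = 0")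
  case True
  then show ?thesis
    using A by (auto simp: norm_bound_def)
next
  case False
  have \<rho>: "0 < \<rho>"
    using spectral_radius_nonneg[OF A] False sr by simp
  define B where "B = of_real (1 / \<rho>) \<cdot>\<^sub>m A"
  have B: "B \<in> carrier_mat n n"
    unfolding B_def using A by simp
  obtain c where c: "\<forall>k. norm_bound (B ^\<^sub>m k) c"
    using spectral_radius_jnf_norm_bound_less_1_upper_triangular[OF B]
      spectral_radius_smult_lt_1[OF A _ sr] False unfolding B_def by auto
  have "norm_bound (A ^\<^sub>m k) (c * \<rho> ^ k)" for k
    unfolding norm_bound_def
  proof (intro allI impI)
    fix i j assume "i < dim_row (A ^\<^sub>m k)" "j < dim_col (A ^\<^sub>m k)"
    then have ij: "i < n" "j < n" using A by (auto split: if_splits)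
    have "(1 / \<rho>) ^ k * cmod ((A ^\<^sub>m k) $$ (i,j)) = cmod ((B ^\<^sub>m k) $$ (i,j))"
      unfolding B_def pow_smult_mat[OF A] using A ij \<rho> by (simp add: norm_mult norm_power norm_divide)
    also have "\<dots> \<le> c"
      using c B ij unfolding norm_bound_def by auto
    finally show "cmod ((A ^\<^sub>m k) $$ (i,j)) \<le> c * \<rho> ^ k"
      using \<rho> by (simp add: field_simps)
  qed
  then show ?thesis by blast
qed

section \<open>The weighted space L2(pi)\<close>

definition pi_inner :: "nat \<Rightarrow> real vec \<Rightarrow> real vec \<Rightarrow> real vec \<Rightarrow> real" where
  "pi_inner n \<pi> x y = (\<Sum>i<n. \<pi> $ i * x $ i * y $ i)"

text \<open>The norm of L2(pi), written with \<^const>\<open>L2_set\<close> so that the Cauchy-Schwarz and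
  triangle inequalities come from the library.\<close>

definition pi_norm :: "nat \<Rightarrow> real vec \<Rightarrow> real vec \<Rightarrow> real" where
  "pi_norm n \<pi> x = L2_set (\<lambda>i. sqrt (\<pi> $ i) * x $ i) {..<n}"

lemma pi_norm_nonneg [simp]: "0 \<le> pi_norm n \<pi> x"
  by (simp add: pi_norm_def)

lemma pi_norm_square:
  assumes "\<forall>i<n. 0 \<le> \<pi> $ i"
  shows "(pi_norm n \<pi> x)\<^sup>2 = pi_inner n \<pi> x x"
proof -
  have "(pi_norm n \<pi> x)\<^sup>2 = (\<Sum>i<n. (sqrt (\<pi> $ i) * x $ i)\<^sup>2)"
    unfolding pi_norm_def L2_set_def by (simp add: sum_nonneg)
  also have "\<dots> = pi_inner n \<pi> x x"
    unfolding pi_inner_def using assms by (intro sum.cong) (auto simp: power_mult_distrib power2_eq_square)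
  finally show ?thesis .
qed

lemma abs_pi_inner_le:
  assumes "\<forall>i<n. 0 \<le> \<pi> $ i"
  shows "\<bar>pi_inner n \<pi> x y\<bar> \<le> pi_norm n \<pi> x * pi_norm n \<pi> y"
proof -
  have "\<bar>pi_inner n \<pi> x y\<bar> \<le> (\<Sum>i<n. \<bar>\<pi> $ i * x $ i * y $ i\<bar>)"
    unfolding pi_inner_def by (rule sum_abs)
  also have "\<dots> = (\<Sum>i<n. \<bar>sqrt (\<pi> $ i) * x $ i\<bar> * \<bar>sqrt (\<pi> $ i) * y $ i\<bar>)"
    using assms by (intro sum.cong) (auto simp: abs_mult)
  also have "\<dots> \<le> pi_norm n \<pi> x * pi_norm n \<pi> y"
    unfolding pi_norm_def by (rule L2_set_mult_ineq)
  finally show ?thesis .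
qed

lemma pi_norm_add_le:
  assumes "x \<in> carrier_vec n" "y \<in> carrier_vec n"
  shows "pi_norm n \<pi> (x + y) \<le> pi_norm n \<pi> x + pi_norm n \<pi> y"
proof -
  have "pi_norm n \<pi> (x + y) = L2_set (\<lambda>i. sqrt (\<pi> $ i) * x $ i + sqrt (\<pi> $ i) * y $ i) {..<n}"
    unfolding pi_norm_def using assms by (intro L2_set_cong) (auto simp: distrib_left)
  then show ?thesis
    unfolding pi_norm_def by (simp add: L2_set_triangle_ineq)
qed

lemma pi_norm_smult:
  assumes "x \<in> carrier_vec n"
  shows "pi_norm n \<pi> (c \<cdot>\<^sub>v x) = \<bar>c\<bar> * pi_norm n \<pi> x"
proof -
  have "pi_norm n \<pi> (c \<cdot>\<^sub>v x) = L2_set (\<lambda>i. \<bar>c\<bar> * \<bar>sqrt (\<pi> $ i) * x $ i\<bar>) {..<n}"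
    unfolding pi_norm_def L2_set_def using assms
    by (intro arg_cong[where f = sqrt] sum.cong) (auto simp: power_mult_distrib)
  also have "\<dots> = \<bar>c\<bar> * L2_set (\<lambda>i. \<bar>sqrt (\<pi> $ i) * x $ i\<bar>) {..<n}"
    by (simp add: L2_set_right_distrib)
  finally show ?thesis
    unfolding pi_norm_def L2_set_def by simp
qed

lemma pi_norm_mult_mat_vec_le:
  assumes A: "A \<in> carrier_mat n n" and bound: "\<forall>i<n. \<forall>j<n. \<bar>A $$ (i,j)\<bar> \<le> c"
    and v: "v \<in> carrier_vec n" and \<pi>: "\<forall>i<n. 0 \<le> \<pi> $ i"
  shows "pi_norm n \<pi> (A *\<^sub>v v) \<le> (\<Sum>i<n. sqrt (\<pi> $ i)) * (c * (\<Sum>j<n. \<bar>v $ j\<bar>))"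
proof -
  have row: "\<bar>(A *\<^sub>v v) $ i\<bar> \<le> c * (\<Sum>j<n. \<bar>v $ j\<bar>)" if i: "i < n" for i
  proof -
    have "\<bar>(A *\<^sub>v v) $ i\<bar> \<le> (\<Sum>j<n. \<bar>A $$ (i,j)\<bar> * \<bar>v $ j\<bar>)"
      using A v i by (simp add: scalar_prod_def atLeast0LessThan sum_abs[THEN order_trans] abs_mult)
    also have "\<dots> \<le> (\<Sum>j<n. c * \<bar>v $ j\<bar>)"
      using bound i by (intro sum_mono mult_right_mono) auto
    finally show ?thesis by (simp add: sum_distrib_left)
  qed
  have "pi_norm n \<pi> (A *\<^sub>v v) \<le> (\<Sum>i<n. \<bar>sqrt (\<pi> $ i) * (A *\<^sub>v v) $ i\<bar>)"
    unfolding pi_norm_def by (rule L2_set_le_sum_abs)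
  also have "\<dots> \<le> (\<Sum>i<n. sqrt (\<pi> $ i) * (c * (\<Sum>j<n. \<bar>v $ j\<bar>)))"
    using row \<pi> by (intro sum_mono) (auto simp: abs_mult intro: mult_left_mono)
  finally show ?thesis by (simp add: sum_distrib_right)
qed

definition pi_op_norm_le :: "nat \<Rightarrow> real vec \<Rightarrow> real mat \<Rightarrow> real \<Rightarrow> bool" where
  "pi_op_norm_le n \<pi> T c \<longleftrightarrow>
    (\<forall>v\<in>carrier_vec n. pi_norm n \<pi> (T *\<^sub>v v) \<le> c * pi_norm n \<pi> v)"

lemma pi_op_norm_le_mono:
  assumes "pi_op_norm_le n \<pi> T a" "a \<le> b"
  shows "pi_op_norm_le n \<pi> T b"
  using assms unfolding pi_op_norm_le_def by (meson order_trans mult_right_mono pi_norm_nonneg)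

lemma pi_op_norm_le_add:
  assumes "T \<in> carrier_mat n n" "S \<in> carrier_mat n n"
    and "pi_op_norm_le n \<pi> T a" "pi_op_norm_le n \<pi> S b"
  shows "pi_op_norm_le n \<pi> (T + S) (a + b)"
  unfolding pi_op_norm_le_def
proof
  fix v :: "real vec" assume v: "v \<in> carrier_vec n"
  have "pi_norm n \<pi> ((T + S) *\<^sub>v v) \<le> pi_norm n \<pi> (T *\<^sub>v v) + pi_norm n \<pi> (S *\<^sub>v v)"
    using assms(1,2) v by (simp add: add_mult_distrib_mat_vec pi_norm_add_le)
  also have "\<dots> \<le> (a + b) * pi_norm n \<pi> v"
    using assms(3,4) v unfolding pi_op_norm_le_def by (simp add: distrib_right add_mono)
  finally show "pi_norm n \<pi> ((T + S) *\<^sub>v v) \<le> (a + b) * pi_norm n \<pi> v" .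
qed

lemma pi_op_norm_le_smult:
  assumes "T \<in> carrier_mat n n" and "pi_op_norm_le n \<pi> T a"
  shows "pi_op_norm_le n \<pi> (c \<cdot>\<^sub>m T) (\<bar>c\<bar> * a)"
  unfolding pi_op_norm_le_def
proof
  fix v :: "real vec" assume v: "v \<in> carrier_vec n"
  show "pi_norm n \<pi> ((c \<cdot>\<^sub>m T) *\<^sub>v v) \<le> \<bar>c\<bar> * a * pi_norm n \<pi> v"
    using assms v unfolding pi_op_norm_le_def
    by (simp add: smult_mat_mult_vec pi_norm_smult mult.assoc mult_left_mono)
qed

section \<open>Reversible matrices\<close>

lemma Pi_mat_carrier [simp]: "Pi_mat n \<pi> \<in> carrier_mat n n"
  unfolding Pi_mat_def by simp

lemma reversible_add:
  assumes "K \<in> carrier_mat n n" "L \<in> carrier_mat n n" "reversible n \<pi> K" "reversible n \<pi> L"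
  shows "reversible n \<pi> (K + L)"
  using assms unfolding reversible_def by (simp add: distrib_left)

lemma reversible_minus:
  assumes "K \<in> carrier_mat n n" "L \<in> carrier_mat n n" "reversible n \<pi> K" "reversible n \<pi> L"
  shows "reversible n \<pi> (K - L)"
  using assms unfolding reversible_def by (simp add: right_diff_distrib)

lemma reversible_smult:
  assumes "K \<in> carrier_mat n n" "reversible n \<pi> K"
  shows "reversible n \<pi> (c \<cdot>\<^sub>m K)"
  using assms unfolding reversible_def by (simp add: mult.left_commute)

lemma reversible_Pi_mat: "reversible n \<pi> (Pi_mat n \<pi>)"
  unfolding reversible_def Pi_mat_def by simp

lemma reversible_pi_inner:
  assumes "K \<in> carrier_mat n n" "reversible n \<pi> K" "x \<in> carrier_vec n" "y \<in> carrier_vec n"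
  shows "pi_inner n \<pi> (K *\<^sub>v x) y = pi_inner n \<pi> x (K *\<^sub>v y)"
proof -
  have "pi_inner n \<pi> (K *\<^sub>v x) y = (\<Sum>i<n. \<Sum>j<n. \<pi> $ i * K $$ (i,j) * x $ j * y $ i)"
    unfolding pi_inner_def using assms
    by (simp add: scalar_prod_def atLeast0LessThan sum_distrib_left sum_distrib_right ac_simps)
  also have "\<dots> = (\<Sum>i<n. \<Sum>j<n. \<pi> $ j * K $$ (j,i) * x $ j * y $ i)"
    using assms(2) unfolding reversible_def by (intro sum.cong) auto
  also have "\<dots> = pi_inner n \<pi> x (K *\<^sub>v y)"
    unfolding pi_inner_def using assms
    by (subst sum.swap) (simp add: scalar_prod_def atLeast0LessThan sum_distrib_left sum_distrib_right ac_simps)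
  finally show ?thesis .
qed

lemma reversible_pow_pi_inner:
  assumes K: "K \<in> carrier_mat n n" and rev: "reversible n \<pi> K"
    and "x \<in> carrier_vec n" "y \<in> carrier_vec n"
  shows "pi_inner n \<pi> (K ^\<^sub>m k *\<^sub>v x) y = pi_inner n \<pi> x (K ^\<^sub>m k *\<^sub>v y)"
  using assms(3,4)
proof (induction k arbitrary: x y)
  case 0
  then show ?case using K by simp
next
  case (Suc k)
  have "pi_inner n \<pi> (K ^\<^sub>m Suc k *\<^sub>v x) y = pi_inner n \<pi> (K ^\<^sub>m k *\<^sub>v (K *\<^sub>v x)) y"
    using K Suc.prems by (simp add: assoc_mult_mat_vec[of _ n n _ n])
  also have "\<dots> = pi_inner n \<pi> (K *\<^sub>v x) (K ^\<^sub>m k *\<^sub>v y)"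
    using Suc.IH[OF mult_mat_vec_carrier[OF K Suc.prems(1)] Suc.prems(2)] .
  also have "\<dots> = pi_inner n \<pi> x (K *\<^sub>v (K ^\<^sub>m k *\<^sub>v y))"
    using reversible_pi_inner[OF K rev Suc.prems(1) mult_mat_vec_carrier[OF pow_carrier_mat[OF K] Suc.prems(2)]] .
  also have "\<dots> = pi_inner n \<pi> x (K ^\<^sub>m Suc k *\<^sub>v y)"
    unfolding pow_mat_Suc_left[OF K] using K Suc.prems by (simp add: assoc_mult_mat_vec[of _ n n _ n])
  finally show ?case .
qed

lemma reversible_stationary:
  assumes "transition_mat n K" "reversible n \<pi> K" "j < n"
  shows "(\<Sum>i<n. \<pi> $ i * K $$ (i,j)) = \<pi> $ j"
proof -
  have "(\<Sum>i<n. \<pi> $ i * K $$ (i,j)) = (\<Sum>i<n. \<pi> $ j * K $$ (j,i))"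
    using assms(2,3) unfolding reversible_def by (intro sum.cong) auto
  also have "\<dots> = \<pi> $ j"
    using assms(1,3) unfolding transition_mat_def by (simp flip: sum_distrib_left)
  finally show ?thesis .
qed

lemma transition_mat_mult_Pi_mat:
  assumes "transition_mat n K"
  shows "K * Pi_mat n \<pi> = Pi_mat n \<pi>"
  using assms unfolding transition_mat_def Pi_mat_def
  by (intro eq_matI) (auto simp: scalar_prod_def atLeast0LessThan simp flip: sum_distrib_right)

lemma Pi_mat_mult_reversible:
  assumes "transition_mat n K" "reversible n \<pi> K"
  shows "Pi_mat n \<pi> * K = Pi_mat n \<pi>"
  using assms reversible_stationary[OF assms] unfolding transition_mat_def Pi_mat_def
  by (intro eq_matI) (auto simp: scalar_prod_def atLeast0LessThan)

lemma transition_mat_Pi_mat: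
  assumes "prob_vec n \<pi>"
  shows "transition_mat n (Pi_mat n \<pi>)"
  using assms unfolding prob_vec_def transition_mat_def Pi_mat_def by (simp add: less_imp_le)

lemma transition_mat_convex_comb:
  assumes "transition_mat n P" "transition_mat n G" "0 \<le> \<alpha>" "\<alpha> \<le> 1"
  shows "transition_mat n (\<alpha> \<cdot>\<^sub>m P + (1 - \<alpha>) \<cdot>\<^sub>m G)"
  using assms unfolding transition_mat_def
  by (auto simp: sum.distrib simp flip: sum_distrib_left)

lemma pow_Suc_minus_Pi_mat:
  assumes \<pi>: "prob_vec n \<pi>" and A: "transition_mat n A" "reversible n \<pi> A"
  shows "A ^\<^sub>m Suc k - Pi_mat n \<pi> = (A - Pi_mat n \<pi>) * (A ^\<^sub>m k - Pi_mat n \<pi>)"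
proof -
  let ?\<Pi> = "Pi_mat n \<pi>"
  have Ac: "A \<in> carrier_mat n n"
    using A unfolding transition_mat_def by simp
  have \<Pi>_pow: "?\<Pi> * A ^\<^sub>m k = ?\<Pi>"
  proof (induction k)
    case (Suc k)
    then show ?case
      using Ac Pi_mat_mult_reversible[OF A]
      by (simp add: assoc_mult_mat[of ?\<Pi> n n _ n A n, symmetric])
  qed (use Ac in \<open>simp add: right_mult_one_mat[OF Pi_mat_carrier]\<close>)
  have Ak: "A ^\<^sub>m k - ?\<Pi> \<in> carrier_mat n n"
    by (rule minus_carrier_mat[OF Pi_mat_carrier])
  have "(A - ?\<Pi>) * (A ^\<^sub>m k - ?\<Pi>) = A * (A ^\<^sub>m k - ?\<Pi>) - ?\<Pi> * (A ^\<^sub>m k - ?\<Pi>)"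
    by (rule minus_mult_distrib_mat[OF Ac Pi_mat_carrier Ak])
  also have "\<dots> = (A * A ^\<^sub>m k - A * ?\<Pi>) - (?\<Pi> * A ^\<^sub>m k - ?\<Pi> * ?\<Pi>)"
    using mult_minus_distrib_mat[OF Ac pow_carrier_mat[OF Ac] Pi_mat_carrier]
      mult_minus_distrib_mat[OF Pi_mat_carrier pow_carrier_mat[OF Ac] Pi_mat_carrier] by simp
  also have "\<dots> = (A ^\<^sub>m Suc k - ?\<Pi>) - (?\<Pi> - ?\<Pi>)"
    using transition_mat_mult_Pi_mat[OF A(1)] transition_mat_mult_Pi_mat[OF transition_mat_Pi_mat[OF \<pi>]]
      \<Pi>_pow pow_mat_Suc_left[OF Ac] by simp
  also have "\<dots> = A ^\<^sub>m Suc k - ?\<Pi>"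
    using Ac by (intro eq_matI) auto
  finally show ?thesis ..
qed

section \<open>Operator norm and spectral radius\<close>

lemma pi_norm_pow_square_le:
  assumes K: "K \<in> carrier_mat n n" and rev: "reversible n \<pi> K"
    and \<pi>: "\<forall>i<n. 0 \<le> \<pi> $ i" and v: "v \<in> carrier_vec n"
  shows "(pi_norm n \<pi> (K ^\<^sub>m k *\<^sub>v v))\<^sup>2 \<le> pi_norm n \<pi> v * pi_norm n \<pi> (K ^\<^sub>m (k + k) *\<^sub>v v)"
proof -
  have Kkv: "K ^\<^sub>m k *\<^sub>v v \<in> carrier_vec n"
    using mult_mat_vec_carrier[OF pow_carrier_mat[OF K] v] .
  have "(pi_norm n \<pi> (K ^\<^sub>m k *\<^sub>v v))\<^sup>2 = pi_inner n \<pi> (K ^\<^sub>m k *\<^sub>v v) (K ^\<^sub>m k *\<^sub>v v)"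
    by (rule pi_norm_square[OF \<pi>])
  also have "\<dots> = pi_inner n \<pi> v (K ^\<^sub>m k *\<^sub>v (K ^\<^sub>m k *\<^sub>v v))"
    by (rule reversible_pow_pi_inner[OF K rev v Kkv])
  also have "K ^\<^sub>m k *\<^sub>v (K ^\<^sub>m k *\<^sub>v v) = K ^\<^sub>m (k + k) *\<^sub>v v"
    unfolding pow_mat_add[OF K] using K v by (simp add: assoc_mult_mat_vec[of _ n n _ n])
  also have "pi_inner n \<pi> v (K ^\<^sub>m (k + k) *\<^sub>v v) \<le> pi_norm n \<pi> v * pi_norm n \<pi> (K ^\<^sub>m (k + k) *\<^sub>v v)"
    using abs_pi_inner_le[OF \<pi>] by (rule abs_le_D1)
  finally show ?thesis .
qed

text \<open>For self-adjoint K the sequence \<open>\<parallel>K^k v\<parallel>\<close> is log-convex; along \<open>k = 2^m\<close> this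
  turns exponential bounds on \<open>K^k\<close> into a bound on \<open>\<parallel>K v\<parallel>\<close>.\<close>

lemma pi_norm_two_pow_le:
  assumes K: "K \<in> carrier_mat n n" and rev: "reversible n \<pi> K"
    and \<pi>: "\<forall>i<n. 0 \<le> \<pi> $ i" and v: "v \<in> carrier_vec n"
  shows "pi_norm n \<pi> (K *\<^sub>v v) ^ 2 ^ m
    \<le> pi_norm n \<pi> v ^ (2 ^ m - 1) * pi_norm n \<pi> (K ^\<^sub>m 2 ^ m *\<^sub>v v)"
proof (induction m)
  case 0
  then show ?case using K by simp
next
  case (Suc m)
  define a where "a = pi_norm n \<pi> (K *\<^sub>v v)"
  define b where "b = pi_norm n \<pi> v"
  define N :: nat where "N = 2 ^ m"
  have N: "2 ^ Suc m = N + N"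
    unfolding N_def by simp
  have "0 < N"
    unfolding N_def by simp
  then have N': "N + N - 1 = Suc (2 * (N - 1))"
    by linarith
  have "a ^ (N + N) = (a ^ N)\<^sup>2"
    by (simp add: power_add power2_eq_square)
  also have "\<dots> \<le> (b ^ (N - 1) * pi_norm n \<pi> (K ^\<^sub>m N *\<^sub>v v))\<^sup>2"
    using Suc unfolding a_def b_def N_def by (intro power_mono) auto
  also have "\<dots> = (b ^ (N - 1))\<^sup>2 * (pi_norm n \<pi> (K ^\<^sub>m N *\<^sub>v v))\<^sup>2"
    by (rule power_mult_distrib)
  also have "\<dots> \<le> (b ^ (N - 1))\<^sup>2 * (b * pi_norm n \<pi> (K ^\<^sub>m (N + N) *\<^sub>v v))"
    unfolding b_def by (intro mult_left_mono pi_norm_pow_square_le[OF K rev \<pi> v]) simp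
  also have "\<dots> = b ^ (N + N - 1) * pi_norm n \<pi> (K ^\<^sub>m (N + N) *\<^sub>v v)"
    unfolding N' by (simp add: ac_simps flip: power_mult)
  finally show ?case unfolding a_def b_def N .
qed

lemma le_one_if_two_pow_bounded:
  fixes q :: real
  assumes "\<And>m. q ^ 2 ^ m \<le> C"
  shows "q \<le> 1"
proof (rule ccontr)
  assume "\<not> q \<le> 1"
  then obtain m where "C < q ^ m"
    using real_arch_pow by fastforce
  also have "q ^ m \<le> q ^ 2 ^ m"
    using \<open>\<not> q \<le> 1\<close> by (intro power_increasing) (auto intro: less_imp_le less_exp)
  finally show False
    using assms[of m] by simp
qed

lemma reversible_pi_norm_le_of_growth:
  assumes K: "K \<in> carrier_mat n n" and rev: "reversible n \<pi> K"
    and \<pi>: "\<forall>i<n. 0 \<le> \<pi> $ i" and v: "v \<in> carrier_vec n"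
    and "0 < \<rho>" and growth: "\<And>k. pi_norm n \<pi> (K ^\<^sub>m k *\<^sub>v v) \<le> C * \<rho> ^ k"
  shows "pi_norm n \<pi> (K *\<^sub>v v) \<le> \<rho> * pi_norm n \<pi> v"
proof (cases "pi_norm n \<pi> v = 0")
  case True
  have "(pi_norm n \<pi> (K ^\<^sub>m 1 *\<^sub>v v))\<^sup>2 \<le> 0"
    using pi_norm_pow_square_le[OF K rev \<pi> v, of 1] True by simp
  then show ?thesis
    using K True by simp
next
  case False
  define a where "a = pi_norm n \<pi> (K *\<^sub>v v)"
  define b where "b = pi_norm n \<pi> v"
  have b: "0 < b"
    using False unfolding b_def by (simp add: order_le_neq_trans)
  have "(a / (\<rho> * b)) ^ 2 ^ m \<le> C / b" for m
  proof -
    define N :: nat where "N = 2 ^ m"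
    have "a ^ N \<le> b ^ (N - 1) * (C * \<rho> ^ N)"
      using pi_norm_two_pow_le[OF K rev \<pi> v, of m] growth[of N] b
      unfolding a_def b_def N_def by (meson order_trans mult_left_mono zero_le_power less_imp_le)
    also have "b ^ (N - 1) = b ^ N / b"
      using b unfolding N_def by (simp add: power_diff)
    finally show ?thesis
      using \<open>0 < \<rho>\<close> b unfolding N_def by (simp add: power_divide power_mult_distrib field_simps)
  qed
  then have "a / (\<rho> * b) \<le> 1"
    by (rule le_one_if_two_pow_bounded)
  then show ?thesis
    using \<open>0 < \<rho>\<close> b unfolding a_def b_def by (simp add: field_simps)
qed

lemma le_mult_if_forall_gt:
  fixes a b r :: real
  assumes "0 \<le> b" and "\<And>\<rho>. r < \<rho> \<Longrightarrow> a \<le> \<rho> * b"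
  shows "a \<le> r * b"
proof (rule dense_ge)
  fix y assume y: "r * b < y"
  show "a \<le> y"
  proof (cases "b = 0")
    case True
    then show ?thesis using assms(2)[of "r + 1"] y by simp
  next
    case False
    then have "r < y / b" using assms(1) y by (simp add: field_simps)
    then show ?thesis using assms(2)[of "y / b"] False by simp
  qed
qed

lemma reversible_pi_op_norm_le_spectral_radius:
  assumes K: "K \<in> carrier_mat n n" and rev: "reversible n \<pi> K" and \<pi>: "\<forall>i<n. 0 \<le> \<pi> $ i"
  shows "pi_op_norm_le n \<pi> K (spectral_radius (map_mat complex_of_real K))"
  unfolding pi_op_norm_le_def
proof
  fix v :: "real vec" assume v: "v \<in> carrier_vec n"
  let ?r = "spectral_radius (map_mat complex_of_real K)"
  show "pi_norm n \<pi> (K *\<^sub>v v) \<le> ?r * pi_norm n \<pi> v"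
  proof (rule le_mult_if_forall_gt)
    fix \<rho> assume "?r < \<rho>"
    then obtain c where c: "\<forall>k. norm_bound (map_mat complex_of_real K ^\<^sub>m k) (c * \<rho> ^ k)"
      using norm_bound_pow_gt_spectral_radius[of _ n] K by fastforce
    show "pi_norm n \<pi> (K *\<^sub>v v) \<le> \<rho> * pi_norm n \<pi> v"
    proof (cases "n = 0")
      case True
      txt \<open>Then the spectral radius is the unspecified \<open>Max {}\<close>, but both norms vanish.\<close>
      then show ?thesis by (simp add: pi_norm_def)
    next
      case False
      have "0 \<le> ?r"
        using spectral_radius_nonneg[of _ n] K False by simp
      have entries: "\<forall>i<n. \<forall>j<n. \<bar>(K ^\<^sub>m k) $$ (i,j)\<bar> \<le> c * \<rho> ^ k" for k
        using c[rule_format, of k] K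
        by (auto simp: norm_bound_def of_real_hom.mat_hom_pow[OF K, symmetric])
      show ?thesis
      proof (rule reversible_pi_norm_le_of_growth[OF K rev \<pi> v])
        show "0 < \<rho>" using \<open>0 \<le> ?r\<close> \<open>?r < \<rho>\<close> by simp
        show "pi_norm n \<pi> (K ^\<^sub>m k *\<^sub>v v)
            \<le> (\<Sum>i<n. sqrt (\<pi> $ i)) * (c * (\<Sum>j<n. \<bar>v $ j\<bar>)) * \<rho> ^ k" for k
          using pi_norm_mult_mat_vec_le[OF pow_carrier_mat[OF K] entries v \<pi>] by (simp add: ac_simps)
      qed
    qed
  qed simp
qed

section \<open>The spectrum of a reversible transition matrix\<close>

lemma reversible_hermitian_form_real:
  assumes "reversible n \<pi> K"
  shows "Im (\<Sum>i<n. \<Sum>j<n. complex_of_real (\<pi> $ i * K $$ (i,j)) * (cnj (v $ i) * v $ j)) = 0"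
proof -
  let ?f = "\<lambda>i j. complex_of_real (\<pi> $ i * K $$ (i,j)) * (cnj (v $ i) * v $ j)"
  have "cnj (\<Sum>i<n. \<Sum>j<n. ?f i j) = (\<Sum>i<n. \<Sum>j<n. ?f j i)"
    unfolding cnj_sum using assms unfolding reversible_def
    by (intro sum.cong refl) (simp add: algebra_simps)
  also have "\<dots> = (\<Sum>i<n. \<Sum>j<n. ?f i j)"
    by (rule sum.swap)
  finally have "cnj (\<Sum>i<n. \<Sum>j<n. ?f i j) = (\<Sum>i<n. \<Sum>j<n. ?f i j)" .
  moreover have "Im z = 0" if "cnj z = z" for z :: complex
    using that by (simp add: complex_eq_iff)
  ultimately show ?thesis
    by blast
qed

lemma reversible_eigenvalue_real:
  fixes K :: "real mat"
  assumes K: "K \<in> carrier_mat n n" and rev: "reversible n \<pi> K" and \<pi>: "\<forall>i<n. 0 < \<pi> $ i"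
    and ev: "eigenvector (map_mat complex_of_real K) v e"
  shows "Im e = 0"
proof -
  from ev K have v: "v \<in> carrier_vec n" "v \<noteq> 0\<^sub>v n"
    and eq: "map_mat complex_of_real K *\<^sub>v v = e \<cdot>\<^sub>v v"
    unfolding eigenvector_def by auto
  have row: "(\<Sum>j<n. of_real (K $$ (i,j)) * v $ j) = e * v $ i" if "i < n" for i
    using arg_cong[OF eq, of "\<lambda>w. w $ i"] K v that
    by (simp add: scalar_prod_def atLeast0LessThan)
  define S where "S = (\<Sum>i<n. \<Sum>j<n. complex_of_real (\<pi> $ i * K $$ (i,j)) * (cnj (v $ i) * v $ j))"
  define D where "D = (\<Sum>i<n. \<pi> $ i * (cmod (v $ i))\<^sup>2)"
  have "S = (\<Sum>i<n. of_real (\<pi> $ i) * cnj (v $ i) * (\<Sum>j<n. of_real (K $$ (i,j)) * v $ j))"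
    unfolding S_def by (simp add: sum_distrib_left algebra_simps)
  also have "\<dots> = (\<Sum>i<n. e * of_real (\<pi> $ i * (cmod (v $ i))\<^sup>2))"
  proof (intro sum.cong refl)
    fix i assume "i \<in> {..<n}"
    then show "of_real (\<pi> $ i) * cnj (v $ i) * (\<Sum>j<n. of_real (K $$ (i,j)) * v $ j)
        = e * of_real (\<pi> $ i * (cmod (v $ i))\<^sup>2)"
      using row[of i] complex_norm_square[of "v $ i"] by (simp add: algebra_simps)
  qed
  finally have S: "S = e * of_real D"
    unfolding D_def by (simp add: sum_distrib_left)
  have "Im S = 0"
    unfolding S_def by (rule reversible_hermitian_form_real[OF rev])
  obtain i where i: "i < n" "v $ i \<noteq> 0"
    using v by (metis eq_vecI carrier_vecD index_zero_vec)
  have "0 < \<pi> $ i * (cmod (v $ i))\<^sup>2"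
    using i \<pi> by simp
  also have "\<dots> \<le> D"
    unfolding D_def using i \<pi> by (intro member_le_sum) (auto intro: less_imp_le)
  finally show ?thesis
    using \<open>Im S = 0\<close> S by simp
qed

lemma proots_prod_linear_factors:
  "proots (\<Prod>r\<leftarrow>rs. [:-r, 1:]) = mset (rs :: 'a :: idom list)"
proof (induction rs)
  case (Cons a rs)
  have "(\<Prod>r\<leftarrow>rs. [:-r, 1:]) \<noteq> 0"
    by (auto simp: prod_list_zero_iff)
  then show ?case
    using Cons by (simp add: proots_mult del: mult_pCons_left)
qed simp

lemma reversible_char_poly_splits:
  assumes K: "K \<in> carrier_mat n n" and rev: "reversible n \<pi> K" and \<pi>: "\<forall>i<n. 0 < \<pi> $ i"
  shows "\<exists>rs. length rs = n \<and> char_poly K = (\<Prod>r\<leftarrow>rs. [:-r, 1:])"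
proof -
  interpret of_real_poly: map_poly_inj_comm_ring_hom complex_of_real ..
  let ?KC = "map_mat complex_of_real K"
  have KC: "?KC \<in> carrier_mat n n"
    using K by simp
  obtain as where as: "char_poly ?KC = (\<Prod>a\<leftarrow>as. [:-a, 1:])" "length as = n"
    using char_poly_factorized[OF KC] by blast
  have real: "of_real (Re a) = a" if "a \<in> set as" for a
  proof -
    have "eigenvalue ?KC a"
      using linear_poly_root[OF that] eigenvalue_root_char_poly[OF KC] as(1) by simp
    then obtain v where "eigenvector ?KC v a"
      unfolding eigenvalue_def by blast
    then show ?thesis
      using reversible_eigenvalue_real[OF K rev \<pi>] by (simp add: complex_eq_iff)
  qed
  have "char_poly ?KC = map_poly complex_of_real (char_poly K)"
    by (rule of_real_hom.char_poly_hom[OF K])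
  then have "map_poly complex_of_real (char_poly K) = map_poly complex_of_real (\<Prod>r\<leftarrow>map Re as. [:-r, 1:])"
    using as(1) real
    by (simp add: of_real_poly.hom_prod_list o_def cong: map_cong)
  then have "char_poly K = (\<Prod>r\<leftarrow>map Re as. [:-r, 1:])"
    by simp
  then show ?thesis
    using as(2) by (intro exI[of _ "map Re as"]) simp
qed

lemma reversible_size_proots_char_poly:
  assumes "K \<in> carrier_mat n n" "reversible n \<pi> K" "\<forall>i<n. 0 < \<pi> $ i"
  shows "size (proots (char_poly K)) = n"
  using reversible_char_poly_splits[OF assms] by (auto simp: proots_prod_linear_factors)

lemma transition_mat_eigenvalue_abs_le_1:
  assumes P: "transition_mat n P" and ev: "eigenvalue P r"
  shows "\<bar>r\<bar> \<le> 1"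
proof -
  from P have Pc: "P \<in> carrier_mat n n" and nonneg: "\<forall>i<n. \<forall>j<n. 0 \<le> P $$ (i,j)"
    and rows: "\<forall>i<n. (\<Sum>j<n. P $$ (i,j)) = 1"
    unfolding transition_mat_def by auto
  obtain v where "eigenvector P v r"
    using ev unfolding eigenvalue_def by blast
  then have v: "v \<in> carrier_vec n" "v \<noteq> 0\<^sub>v n" and eq: "P *\<^sub>v v = r \<cdot>\<^sub>v v"
    using Pc unfolding eigenvector_def by auto
  obtain i1 where i1: "i1 < n" "v $ i1 \<noteq> 0"
    using v by (metis eq_vecI carrier_vecD index_zero_vec)
  define m where "m = Max ((\<lambda>i. \<bar>v $ i\<bar>) ` {..<n})"
  have "m \<in> (\<lambda>i. \<bar>v $ i\<bar>) ` {..<n}"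
    unfolding m_def using i1 by (intro Max_in) auto
  then obtain i where i: "i < n" "m = \<bar>v $ i\<bar>"
    by auto
  have le_m: "\<bar>v $ j\<bar> \<le> m" if "j < n" for j
    unfolding m_def using that by (intro Max_ge) auto
  have "0 < m"
    using le_m[OF i1(1)] i1(2) by linarith
  have "\<bar>r\<bar> * m = \<bar>\<Sum>j<n. P $$ (i,j) * v $ j\<bar>"
    using arg_cong[OF eq, of "\<lambda>w. w $ i"] Pc v i
    by (simp add: scalar_prod_def atLeast0LessThan abs_mult)
  also have "\<dots> \<le> (\<Sum>j<n. P $$ (i,j) * m)"
    using nonneg le_m i by (intro order_trans[OF sum_abs] sum_mono) (auto simp: abs_mult intro: mult_left_mono)
  also have "\<dots> = m"
    using rows i by (simp flip: sum_distrib_right)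
  finally show ?thesis
    using \<open>0 < m\<close> by simp
qed

lemma transition_mat_root_le_1:
  assumes P: "transition_mat n P" and "x \<in># proots (char_poly P)"
  shows "x \<le> 1"
proof -
  have Pc: "P \<in> carrier_mat n n"
    using P unfolding transition_mat_def by simp
  have "char_poly P \<noteq> 0"
    using degree_monic_char_poly[OF Pc] by auto
  then have "eigenvalue P x"
    using assms(2) eigenvalue_root_char_poly[OF Pc] by simp
  then show ?thesis
    using transition_mat_eigenvalue_abs_le_1[OF P] by fastforce
qed

definition col0_shear_mat :: "nat \<Rightarrow> 'a :: ring_1 \<Rightarrow> 'a mat" where
  "col0_shear_mat n c = mat n n (\<lambda>(i,j). if i = j then 1 else if j = 0 then c else 0)"

text \<open>If the row sums of X are all s, conjugating X by \<^const>\<open>col0_shear_mat\<close> turns its first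
  column into \<open>(s, 0, \<dots>, 0)\<close>; the deflation is the remaining lower right block, i.e. X acting
  on vectors modulo constants.\<close>

definition const_deflation_mat :: "nat \<Rightarrow> 'a :: ring_1 mat \<Rightarrow> 'a mat" where
  "const_deflation_mat n X = mat (n - 1) (n - 1) (\<lambda>(i,j). X $$ (i + 1, j + 1) - X $$ (0, j + 1))"

lemma col0_shear_mat_dim [simp]:
  "dim_row (col0_shear_mat n c) = n" "dim_col (col0_shear_mat n c) = n"
  unfolding col0_shear_mat_def by simp_all

lemma col0_shear_mat_carrier [simp]: "col0_shear_mat n c \<in> carrier_mat n n"
  unfolding carrier_mat_def by simp

lemma mult_col0_shear_mat_index:
  assumes "X \<in> carrier_mat n n" "i < n" "j < n"
  shows "(X * col0_shear_mat n 1) $$ (i,j) = (if j = 0 then (\<Sum>k<n. X $$ (i,k)) else X $$ (i,j))"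
proof -
  have "(X * col0_shear_mat n 1) $$ (i,j) = (\<Sum>k<n. X $$ (i,k) * col0_shear_mat n 1 $$ (k,j))"
    using assms by (simp add: scalar_prod_def atLeast0LessThan)
  also have "\<dots> = (\<Sum>k<n. if j = 0 \<or> k = j then X $$ (i,k) else 0)"
    using assms(3) unfolding col0_shear_mat_def by (intro sum.cong) auto
  finally show ?thesis
    using assms(3) by simp
qed

lemma col0_shear_mat_mult_index:
  assumes "Y \<in> carrier_mat n n" "i < n" "j < n"
  shows "(col0_shear_mat n (-1) * Y) $$ (i,j) = (if i = 0 then Y $$ (0,j) else Y $$ (i,j) - Y $$ (0,j))"
proof -
  have "(col0_shear_mat n (-1) * Y) $$ (i,j) = (\<Sum>k<n. col0_shear_mat n (-1) $$ (i,k) * Y $$ (k,j))"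
    using assms by (simp add: scalar_prod_def atLeast0LessThan)
  also have "\<dots> = (\<Sum>k<n. (if k = i then Y $$ (i,j) else 0) - (if k = 0 \<and> i \<noteq> 0 then Y $$ (0,j) else 0))"
    using assms(2) unfolding col0_shear_mat_def by (intro sum.cong) auto
  finally show ?thesis
    using assms(2) by (simp add: sum_subtractf)
qed

lemma col0_shear_mat_inverse:
  "col0_shear_mat n (-1) * col0_shear_mat n (1 :: 'a :: field) = 1\<^sub>m n"
  "col0_shear_mat n (1 :: 'a :: field) * col0_shear_mat n (-1) = 1\<^sub>m n"
proof -
  show inv: "col0_shear_mat n (-1) * col0_shear_mat n (1 :: 'a) = 1\<^sub>m n"
  proof (rule eq_matI)
    fix i j assume "i < dim_row (1\<^sub>m n :: 'a mat)" "j < dim_col (1\<^sub>m n :: 'a mat)"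
    then show "(col0_shear_mat n (-1) * col0_shear_mat n 1) $$ (i,j) = (1\<^sub>m n :: 'a mat) $$ (i,j)"
      by (subst col0_shear_mat_mult_index) (auto simp: col0_shear_mat_def)
  qed simp_all
  show "col0_shear_mat n (1 :: 'a) * col0_shear_mat n (-1) = 1\<^sub>m n"
    by (rule mat_mult_left_right_inverse[OF _ _ inv]) auto
qed

lemma char_poly_const_row_sums:
  fixes X :: "'a :: field mat"
  assumes X: "X \<in> carrier_mat n n" and "0 < n" and rows: "\<forall>i<n. (\<Sum>j<n. X $$ (i,j)) = s"
  shows "char_poly X = [:-s, 1:] * char_poly (const_deflation_mat n X)"
proof -
  define B where "B = col0_shear_mat n (-1) * (X * col0_shear_mat n 1)"
  have "similar_mat B X"
  proof (rule similar_matI)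
    show "{B, X, col0_shear_mat n (-1), col0_shear_mat n 1} \<subseteq> carrier_mat n n"
      unfolding B_def using X by auto
    show "B = col0_shear_mat n (-1) * X * col0_shear_mat n 1"
      unfolding B_def using X by (simp add: assoc_mult_mat[of _ n n X n _ n])
  qed (simp_all add: col0_shear_mat_inverse)
  then have "char_poly X = char_poly B"
    by (simp add: char_poly_similar)
  also have "B = four_block_mat (mat 1 1 (\<lambda>_. s)) (mat 1 (n - 1) (\<lambda>(_, j). X $$ (0, j + 1)))
      (0\<^sub>m (n - 1) 1) (const_deflation_mat n X)"
    unfolding B_def using X \<open>0 < n\<close> rows
    by (intro eq_matI) (auto simp: col0_shear_mat_mult_index mult_col0_shear_mat_index
        const_deflation_mat_def simp del: index_mult_mat(1))
  also have "char_poly \<dots> = char_poly (mat 1 1 (\<lambda>_. s)) * char_poly (const_deflation_mat n X)"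
    by (rule char_poly_four_block_zeros_col) (auto simp: const_deflation_mat_def)
  also have "char_poly (mat 1 1 (\<lambda>_. s)) = [:-s, 1:]"
    by (simp add: char_poly_defs det_def sign_def)
  finally show ?thesis .
qed

lemma sorted_list_of_multiset_add_mset_max_bounds:
  fixes S :: "'a :: linorder multiset"
  assumes "\<forall>x\<in>#S. x \<le> m" and "r \<in># S"
  defines "L \<equiv> sorted_list_of_multiset (add_mset m S)"
  shows "L ! 0 \<le> r" and "r \<le> L ! (size S - 1)"
proof -
  define L' where "L' = sorted_list_of_multiset S"
  have "sorted (L' @ [m])"
    using assms(1) unfolding L'_def by (simp add: sorted_append)
  moreover have "add_mset m S = mset (L' @ [m])"
    unfolding L'_def by simp
  ultimately have L: "L = L' @ [m]"
    unfolding L_def by (simp only: sorted_list_of_multiset_mset sorted_sort_id)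
  have sorted: "sorted L'" and len: "length L' = size S"
    unfolding L'_def by (simp_all flip: size_mset)
  obtain k where k: "k < length L'" "L' ! k = r"
    using assms(2) unfolding L'_def by (metis in_set_conv_nth set_sorted_list_of_multiset)
  show "L ! 0 \<le> r"
    using sorted_nth_mono[OF sorted, of 0 k] k unfolding L by (auto simp: nth_append)
  show "r \<le> L ! (size S - 1)"
    using sorted_nth_mono[OF sorted, of k "size S - 1"] k len unfolding L by (simp add: nth_append)
qed

lemma abs_const_deflation_root_le:
  assumes \<pi>: "prob_vec n \<pi>" and P: "transition_mat n P" and rev: "reversible n \<pi> P"
    and root: "poly (char_poly (const_deflation_mat n P)) r = 0"
  shows "\<bar>r\<bar> \<le> max \<bar>lambda2 n P\<bar> \<bar>lambda_min n P\<bar>"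
proof -
  have \<pi>_pos: "\<forall>i<n. 0 < \<pi> $ i" and "0 < n"
    using \<pi> unfolding prob_vec_def by (auto intro: Nat.gr0I)
  have Pc: "P \<in> carrier_mat n n" and rows: "\<forall>i<n. (\<Sum>j<n. P $$ (i,j)) = 1"
    using P unfolding transition_mat_def by auto
  define S where "S = proots (char_poly (const_deflation_mat n P))"
  have "const_deflation_mat n P \<in> carrier_mat (n - 1) (n - 1)"
    unfolding const_deflation_mat_def by simp
  from degree_monic_char_poly[OF this] have "char_poly (const_deflation_mat n P) \<noteq> 0"
    by auto
  then have roots: "proots (char_poly P) = add_mset 1 S"
    unfolding S_def char_poly_const_row_sums[OF Pc \<open>0 < n\<close> rows]
    by (simp add: proots_mult del: mult_pCons_left)
  moreover have "r \<in># S"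
    using root \<open>char_poly (const_deflation_mat n P) \<noteq> 0\<close> unfolding S_def by simp
  moreover have "size S = n - 1"
    using reversible_size_proots_char_poly[OF Pc rev \<pi>_pos] roots by simp
  moreover have "\<forall>x\<in>#S. x \<le> 1"
    using transition_mat_root_le_1[OF P] roots by simp
  txt \<open>\<^const>\<open>eigs_asc\<close> is ascending with the eigenvalue 1 last, so S occupies positions 0 to n-2.\<close>
  ultimately have "eigs_asc P ! 0 \<le> r" "r \<le> eigs_asc P ! (n - 2)"
    using sorted_list_of_multiset_add_mset_max_bounds[of S 1 r]
    unfolding eigs_asc_def by (simp_all add: numeral_2_eq_2)
  then show ?thesis
    unfolding lambda2_def lambda_min_def by linarith
qed

text \<open>Together with \<open>char_poly P = [:-1, 1:] * char_poly (const_deflation_mat n P)\<close>, this shows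
  that the nonzero eigenvalues of \<open>P - Pi_mat n \<pi>\<close> are those of P with one eigenvalue 1 removed.\<close>

lemma char_poly_minus_Pi_mat:
  assumes \<pi>: "prob_vec n \<pi>" and P: "transition_mat n P"
  shows "char_poly (P - Pi_mat n \<pi>) = [:0, 1:] * char_poly (const_deflation_mat n P)"
proof -
  have sum1: "(\<Sum>i<n. \<pi> $ i) = 1" and "0 < n"
    using \<pi> unfolding prob_vec_def by (auto intro: Nat.gr0I)
  have Pc: "P \<in> carrier_mat n n" and rows: "\<forall>i<n. (\<Sum>j<n. P $$ (i,j)) = 1"
    using P unfolding transition_mat_def by auto
  have M: "P - Pi_mat n \<pi> \<in> carrier_mat n n"
    by (rule minus_carrier_mat[OF Pi_mat_carrier])
  have "\<forall>i<n. (\<Sum>j<n. (P - Pi_mat n \<pi>) $$ (i,j)) = 0"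
    unfolding Pi_mat_def using Pc rows sum1 by (simp add: sum_subtractf)
  moreover have "const_deflation_mat n (P - Pi_mat n \<pi>) = const_deflation_mat n P"
    unfolding const_deflation_mat_def Pi_mat_def using Pc by (intro eq_matI) auto
  ultimately show ?thesis
    using char_poly_const_row_sums[OF M \<open>0 < n\<close>, of 0]
    by (simp del: mult_pCons_left)
qed

lemma spectral_radius_minus_Pi_mat_le:
  assumes \<pi>: "prob_vec n \<pi>" and P: "transition_mat n P" and rev: "reversible n \<pi> P"
  shows "spectral_radius (map_mat complex_of_real (P - Pi_mat n \<pi>))
    \<le> max \<bar>lambda2 n P\<bar> \<bar>lambda_min n P\<bar>"
proof -
  have \<pi>_pos: "\<forall>i<n. 0 < \<pi> $ i" and "0 < n"
    using \<pi> unfolding prob_vec_def by (auto intro: Nat.gr0I)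
  have Pc: "P \<in> carrier_mat n n"
    using P unfolding transition_mat_def by auto
  define M where "M = P - Pi_mat n \<pi>"
  have M: "M \<in> carrier_mat n n"
    unfolding M_def by (rule minus_carrier_mat[OF Pi_mat_carrier])
  have rev_M: "reversible n \<pi> M"
    unfolding M_def using Pc by (intro reversible_minus rev reversible_Pi_mat) simp_all
  let ?MC = "map_mat complex_of_real M"
  have MC: "?MC \<in> carrier_mat n n"
    using M by simp
  obtain e where "eigenvalue ?MC e" and sr: "spectral_radius ?MC = cmod e"
    using spectral_radius_mem_max(1)[OF MC \<open>0 < n\<close>] unfolding spectrum_def by auto
  then obtain v where "eigenvector ?MC v e"
    unfolding eigenvalue_def by blast
  then have e: "e = of_real (Re e)"
    using reversible_eigenvalue_real[OF M rev_M \<pi>_pos] by (simp add: complex_eq_iff)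
  have "poly (char_poly ?MC) e = 0"
    using \<open>eigenvalue ?MC e\<close> eigenvalue_root_char_poly[OF MC] by simp
  then have "poly (char_poly M) (Re e) = 0"
    unfolding of_real_hom.char_poly_hom[OF M] by (subst (asm) e) simp
  then have "Re e = 0 \<or> poly (char_poly (const_deflation_mat n P)) (Re e) = 0"
    unfolding M_def char_poly_minus_Pi_mat[OF \<pi> P] by simp
  then have "\<bar>Re e\<bar> \<le> max \<bar>lambda2 n P\<bar> \<bar>lambda_min n P\<bar>"
    using abs_const_deflation_root_le[OF \<pi> P rev] by fastforce
  then show ?thesis
    unfolding M_def[symmetric] sr by (subst e) simp
qed

lemma pi_op_norm_le_minus_Pi_mat_gap:
  assumes \<pi>: "prob_vec n \<pi>" and P: "transition_mat n P" "reversible n \<pi> P"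
  shows "pi_op_norm_le n \<pi> (P - Pi_mat n \<pi>) (1 - abs_spectral_gap n P)"
proof -
  have Pc: "P \<in> carrier_mat n n"
    using P unfolding transition_mat_def by simp
  have "pi_op_norm_le n \<pi> (P - Pi_mat n \<pi>) (spectral_radius (map_mat complex_of_real (P - Pi_mat n \<pi>)))"
    using \<pi> unfolding prob_vec_def
    by (intro reversible_pi_op_norm_le_spectral_radius minus_carrier_mat reversible_minus Pc P(2)
        Pi_mat_carrier reversible_Pi_mat) (simp_all add: less_imp_le)
  then show ?thesis
    unfolding abs_spectral_gap_def
    by (rule pi_op_norm_le_mono) (simp add: spectral_radius_minus_Pi_mat_le[OF \<pi> P])
qed

section \<open>Contraction by transition matrices\<close>

lemma square_mult_mat_vec_le:
  assumes K: "transition_mat n K" and v: "v \<in> carrier_vec n" and i: "i < n"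
  shows "((K *\<^sub>v v) $ i)\<^sup>2 \<le> (\<Sum>j<n. K $$ (i,j) * (v $ j)\<^sup>2)"
proof -
  have Kc: "K \<in> carrier_mat n n" and nonneg: "\<forall>j<n. 0 \<le> row K i $ j"
    and row_sum: "(\<Sum>j<n. K $$ (i,j)) = 1"
    using K i unfolding transition_mat_def by auto
  have "(K *\<^sub>v v) $ i = pi_inner n (row K i) v (vec n (\<lambda>_. 1))"
    using Kc v i unfolding pi_inner_def by (simp add: scalar_prod_def atLeast0LessThan)
  then have "((K *\<^sub>v v) $ i)\<^sup>2
      \<le> (pi_norm n (row K i) v)\<^sup>2 * (pi_norm n (row K i) (vec n (\<lambda>_. 1)))\<^sup>2"
    using power_mono[OF abs_pi_inner_le[OF nonneg, of v "vec n (\<lambda>_. 1)"] abs_ge_zero, of 2]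
    by (simp add: power_mult_distrib)
  also have "\<dots> = (\<Sum>j<n. K $$ (i,j) * (v $ j)\<^sup>2)"
    using Kc i row_sum unfolding pi_norm_square[OF nonneg] pi_inner_def
    by (simp add: power2_eq_square mult.assoc)
  finally show ?thesis .
qed

lemma transition_mat_pi_op_norm_le_1:
  assumes K: "transition_mat n K" "reversible n \<pi> K" and \<pi>: "\<forall>i<n. 0 \<le> \<pi> $ i"
  shows "pi_op_norm_le n \<pi> K 1"
  unfolding pi_op_norm_le_def
proof
  fix v :: "real vec" assume v: "v \<in> carrier_vec n"
  have "(pi_norm n \<pi> (K *\<^sub>v v))\<^sup>2 = (\<Sum>i<n. \<pi> $ i * ((K *\<^sub>v v) $ i)\<^sup>2)"
    unfolding pi_norm_square[OF \<pi>] pi_inner_def by (simp add: power2_eq_square mult.assoc)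
  also have "\<dots> \<le> (\<Sum>i<n. \<pi> $ i * (\<Sum>j<n. K $$ (i,j) * (v $ j)\<^sup>2))"
    using square_mult_mat_vec_le[OF K(1) v] \<pi> by (intro sum_mono mult_left_mono) auto
  also have "\<dots> = (\<Sum>j<n. (\<Sum>i<n. \<pi> $ i * K $$ (i,j)) * (v $ j)\<^sup>2)"
    by (simp add: sum_distrib_left mult.assoc) (subst sum.swap, simp add: sum_distrib_right mult.assoc)
  also have "\<dots> = (pi_norm n \<pi> v)\<^sup>2"
    unfolding pi_norm_square[OF \<pi>] pi_inner_def using reversible_stationary[OF K]
    by (simp add: power2_eq_square mult.assoc)
  finally show "pi_norm n \<pi> (K *\<^sub>v v) \<le> 1 * pi_norm n \<pi> v"
    using power2_le_imp_le by simp
qed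

lemma pi_norm_minus_Pi_mat_square:
  assumes \<pi>: "prob_vec n \<pi>" and K: "transition_mat n K" "reversible n \<pi> K"
    and v: "v \<in> carrier_vec n"
  shows "(pi_norm n \<pi> ((K - Pi_mat n \<pi>) *\<^sub>v v))\<^sup>2
    = (pi_norm n \<pi> (K *\<^sub>v v))\<^sup>2 - (\<Sum>j<n. \<pi> $ j * v $ j)\<^sup>2"
proof -
  have pos: "\<forall>i<n. 0 \<le> \<pi> $ i" and sum1: "(\<Sum>i<n. \<pi> $ i) = 1"
    using \<pi> unfolding prob_vec_def by (auto intro: less_imp_le)
  have Kc: "K \<in> carrier_mat n n"
    using K unfolding transition_mat_def by simp
  define u where "u = K *\<^sub>v v"
  define m where "m = (\<Sum>j<n. \<pi> $ j * v $ j)"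
  have "(\<Sum>i<n. \<pi> $ i * u $ i) = (\<Sum>i<n. \<Sum>j<n. \<pi> $ i * K $$ (i,j) * v $ j)"
    unfolding u_def using Kc v by (simp add: scalar_prod_def atLeast0LessThan sum_distrib_left mult.assoc)
  also have "\<dots> = (\<Sum>j<n. (\<Sum>i<n. \<pi> $ i * K $$ (i,j)) * v $ j)"
    by (subst sum.swap) (simp add: sum_distrib_right)
  finally have u_mean: "(\<Sum>i<n. \<pi> $ i * u $ i) = m"
    unfolding m_def using reversible_stationary[OF K] by simp
  have "(pi_norm n \<pi> ((K - Pi_mat n \<pi>) *\<^sub>v v))\<^sup>2 = (\<Sum>i<n. \<pi> $ i * (u $ i - m)\<^sup>2)"
    unfolding pi_norm_square[OF pos] pi_inner_def u_def m_def using Kc v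
    by (intro sum.cong) (auto simp: scalar_prod_def atLeast0LessThan Pi_mat_def power2_eq_square
        sum_subtractf algebra_simps)
  also have "\<dots> = (\<Sum>i<n. \<pi> $ i * (u $ i)\<^sup>2) - 2 * m * (\<Sum>i<n. \<pi> $ i * u $ i)
      + m\<^sup>2 * (\<Sum>i<n. \<pi> $ i)"
    by (simp add: power2_eq_square algebra_simps sum.distrib sum_subtractf sum_distrib_left)
  also have "\<dots> = (pi_norm n \<pi> u)\<^sup>2 - m\<^sup>2"
    using u_mean sum1 unfolding pi_norm_square[OF pos] pi_inner_def
    by (simp add: power2_eq_square mult.assoc)
  finally show ?thesis
    unfolding u_def m_def .
qed

lemma pi_op_norm_le_minus_Pi_mat:
  assumes \<pi>: "prob_vec n \<pi>" and K: "transition_mat n K" "reversible n \<pi> K"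
  shows "pi_op_norm_le n \<pi> (K - Pi_mat n \<pi>) 1"
  unfolding pi_op_norm_le_def
proof
  fix v :: "real vec" assume v: "v \<in> carrier_vec n"
  have "pi_norm n \<pi> (K *\<^sub>v v) \<le> pi_norm n \<pi> v"
    using transition_mat_pi_op_norm_le_1[OF K] \<pi> v unfolding pi_op_norm_le_def prob_vec_def
    by (simp add: less_imp_le)
  then have "(pi_norm n \<pi> (K *\<^sub>v v))\<^sup>2 \<le> (pi_norm n \<pi> v)\<^sup>2"
    by (simp add: power_mono)
  then have "(pi_norm n \<pi> ((K - Pi_mat n \<pi>) *\<^sub>v v))\<^sup>2 \<le> (pi_norm n \<pi> v)\<^sup>2"
    unfolding pi_norm_minus_Pi_mat_square[OF \<pi> K v]
    using zero_le_power2[of "\<Sum>j<n. \<pi> $ j * v $ j"] by linarith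
  then show "pi_norm n \<pi> ((K - Pi_mat n \<pi>) *\<^sub>v v) \<le> 1 * pi_norm n \<pi> v"
    using power2_le_imp_le by simp
qed

lemma pi_op_norm_le_convex_comb_minus_Pi_mat:
  assumes "P \<in> carrier_mat n n" "G \<in> carrier_mat n n" "0 \<le> \<alpha>" "\<alpha> \<le> 1"
    and "pi_op_norm_le n \<pi> (P - Pi_mat n \<pi>) a" "pi_op_norm_le n \<pi> (G - Pi_mat n \<pi>) b"
  shows "pi_op_norm_le n \<pi> (\<alpha> \<cdot>\<^sub>m P + (1 - \<alpha>) \<cdot>\<^sub>m G - Pi_mat n \<pi>)
    (\<alpha> * a + (1 - \<alpha>) * b)"
proof -
  have "\<alpha> \<cdot>\<^sub>m P + (1 - \<alpha>) \<cdot>\<^sub>m G - Pi_mat n \<pi>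
      = \<alpha> \<cdot>\<^sub>m (P - Pi_mat n \<pi>) + (1 - \<alpha>) \<cdot>\<^sub>m (G - Pi_mat n \<pi>)"
    unfolding Pi_mat_def using assms(1,2) by (intro eq_matI) (auto simp: algebra_simps)
  moreover have "pi_op_norm_le n \<pi> (\<alpha> \<cdot>\<^sub>m (P - Pi_mat n \<pi>) + (1 - \<alpha>) \<cdot>\<^sub>m (G - Pi_mat n \<pi>))
      (\<bar>\<alpha>\<bar> * a + \<bar>1 - \<alpha>\<bar> * b)"
    using assms by (intro pi_op_norm_le_add pi_op_norm_le_smult minus_carrier_mat smult_carrier_mat
        Pi_mat_carrier)
  ultimately show ?thesis
    using assms(3,4) by simp
qed

section \<open>The Gibbs kernel\<close>

lemma block_of_eq:
  assumes "partition_on A Q" "B \<in> Q" "x \<in> B"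
  shows "block_of Q x = B"
  unfolding block_of_def
proof (rule the_equality)
  fix B' assume "B' \<in> Q \<and> x \<in> B'"
  then show "B' = B"
    using assms partition_onD2[OF assms(1)] by (auto dest: disjointD)
qed (use assms in simp)

lemma block_of_mem:
  assumes "partition_on A Q" "x \<in> A"
  shows "block_of Q x \<in> Q" "x \<in> block_of Q x"
proof -
  obtain B where "B \<in> Q" "x \<in> B"
    using assms partition_onD1[OF assms(1)] by auto
  then show "block_of Q x \<in> Q" "x \<in> block_of Q x"
    using block_of_eq[OF assms(1)] by simp_all
qed

lemma block_of_subset:
  assumes "partition_on A Q" "x \<in> A"
  shows "block_of Q x \<subseteq> A"
  using block_of_mem[OF assms] partition_onD1[OF assms(1)] by auto

lemma mem_block_of_sym:
  assumes "partition_on A Q" "x \<in> A" "y \<in> block_of Q x"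
  shows "block_of Q y = block_of Q x"
  using block_of_eq[OF assms(1) block_of_mem(1)[OF assms(1,2)] assms(3)] .

lemma gibbs_kernel_index:
  assumes "x < n" "y < n"
  shows "gibbs_kernel n \<pi> Q $$ (x,y)
    = (if y \<in> block_of Q x then \<pi> $ y / (\<Sum>z\<in>block_of Q x. \<pi> $ z) else 0)"
  unfolding gibbs_kernel_def using assms by simp

lemma gibbs_kernel_transition_mat:
  assumes \<pi>: "prob_vec n \<pi>" and Q: "partition_on {0..<n} Q"
  shows "transition_mat n (gibbs_kernel n \<pi> Q)"
proof -
  have pos: "\<forall>i<n. 0 < \<pi> $ i"
    using \<pi> unfolding prob_vec_def by simp
  have block_pos: "0 < (\<Sum>z\<in>block_of Q x. \<pi> $ z)" and block_sub: "block_of Q x \<subseteq> {..<n}"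
    if "x < n" for x
  proof -
    show sub: "block_of Q x \<subseteq> {..<n}"
      using block_of_subset[OF Q, of x] that by fastforce
    have "\<pi> $ x \<le> (\<Sum>z\<in>block_of Q x. \<pi> $ z)"
      using block_of_mem(2)[OF Q] sub pos that
      by (intro member_le_sum) (auto intro: less_imp_le finite_subset)
    then show "0 < (\<Sum>z\<in>block_of Q x. \<pi> $ z)"
      using pos that by force
  qed
  have "(\<Sum>y<n. gibbs_kernel n \<pi> Q $$ (x,y)) = 1" if x: "x < n" for x
  proof -
    have "(\<Sum>y<n. gibbs_kernel n \<pi> Q $$ (x,y)) = (\<Sum>y<n. if y \<in> block_of Q x
        then \<pi> $ y / (\<Sum>z\<in>block_of Q x. \<pi> $ z) else 0)"
      using x by (intro sum.cong) (simp_all add: gibbs_kernel_index)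
    also have "\<dots> = (\<Sum>y\<in>block_of Q x. \<pi> $ y / (\<Sum>z\<in>block_of Q x. \<pi> $ z))"
      using block_sub[OF x] by (simp add: sum.If_cases Int_absorb1)
    also have "\<dots> = 1"
      using block_pos[OF x] by (simp flip: sum_divide_distrib)
    finally show ?thesis .
  qed
  moreover have "\<forall>x<n. \<forall>y<n. 0 \<le> gibbs_kernel n \<pi> Q $$ (x,y)"
    using pos block_pos by (simp add: gibbs_kernel_index less_imp_le)
  ultimately show ?thesis
    unfolding transition_mat_def gibbs_kernel_def by simp
qed

lemma gibbs_kernel_reversible:
  assumes Q: "partition_on {0..<n} Q"
  shows "reversible n \<pi> (gibbs_kernel n \<pi> Q)"
  unfolding reversible_def
proof (intro allI impI)
  fix x y assume xy: "x < n" "y < n"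
  have block_sym: "a \<in> block_of Q b" if "b \<in> block_of Q a" "a < n" for a b
    using mem_block_of_sym[OF Q _ that(1)] block_of_mem(2)[OF Q, of a] that(2) by simp
  have "y \<in> block_of Q x \<longleftrightarrow> x \<in> block_of Q y"
    using block_sym[of x y] block_sym[of y x] xy by blast
  moreover have "y \<in> block_of Q x \<Longrightarrow> block_of Q y = block_of Q x"
    using mem_block_of_sym[OF Q, of x y] xy by simp
  ultimately show "\<pi> $ x * gibbs_kernel n \<pi> Q $$ (x,y) = \<pi> $ y * gibbs_kernel n \<pi> Q $$ (y,x)"
    using xy by (simp add: gibbs_kernel_index)
qed

section \<open>The weighted Frobenius norm\<close>

lemma frob_sq_eq_sum_col:
  assumes X: "X \<in> carrier_mat n n" and \<pi>: "\<forall>i<n. 0 \<le> \<pi> $ i"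
  shows "frob_sq n \<pi> X = (\<Sum>i<n. (pi_norm n \<pi> (col X i))\<^sup>2 / \<pi> $ i)"
proof -
  have "frob_sq n \<pi> X = (\<Sum>i<n. \<Sum>k<n. \<pi> $ k * X $$ (k,i) / \<pi> $ i * X $$ (k,i))"
    unfolding frob_sq_def mtrace_def adjoint_pi_def using X
    by (intro sum.cong) (simp_all add: scalar_prod_def atLeast0LessThan)
  also have "\<dots> = (\<Sum>i<n. pi_inner n \<pi> (col X i) (col X i) / \<pi> $ i)"
    unfolding pi_inner_def using X by (intro sum.cong) (simp_all add: sum_divide_distrib)
  finally show ?thesis
    by (simp add: pi_norm_square[OF \<pi>])
qed

lemma frob_sq_mult_le:
  assumes T: "T \<in> carrier_mat n n" and X: "X \<in> carrier_mat n n"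
    and \<pi>: "\<forall>i<n. 0 < \<pi> $ i" and op: "pi_op_norm_le n \<pi> T c"
  shows "frob_sq n \<pi> (T * X) \<le> c\<^sup>2 * frob_sq n \<pi> X"
proof -
  have \<pi>0: "\<forall>i<n. 0 \<le> \<pi> $ i"
    using \<pi> by (simp add: less_imp_le)
  have col: "(pi_norm n \<pi> (col (T * X) i))\<^sup>2 \<le> c\<^sup>2 * (pi_norm n \<pi> (col X i))\<^sup>2" if "i < n" for i
  proof -
    have "pi_norm n \<pi> (col (T * X) i) \<le> c * pi_norm n \<pi> (col X i)"
      using op X that unfolding pi_op_norm_le_def col_mult2[OF T X that] by simp
    from power_mono[OF this pi_norm_nonneg, of 2] show ?thesis
      by (simp add: power_mult_distrib)
  qed
  have "frob_sq n \<pi> (T * X) = (\<Sum>i<n. (pi_norm n \<pi> (col (T * X) i))\<^sup>2 / \<pi> $ i)"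
    using T X by (intro frob_sq_eq_sum_col[OF _ \<pi>0]) simp
  also have "\<dots> \<le> (\<Sum>i<n. c\<^sup>2 * (pi_norm n \<pi> (col X i))\<^sup>2 / \<pi> $ i)"
    using col \<pi>0 by (intro sum_mono divide_right_mono) auto
  also have "\<dots> = c\<^sup>2 * frob_sq n \<pi> X"
    by (simp add: frob_sq_eq_sum_col[OF X \<pi>0] sum_distrib_left)
  finally show ?thesis .
qed

lemma frob_sq_pow_minus_Pi_mat_le:
  assumes \<pi>: "prob_vec n \<pi>" and A: "transition_mat n A" "reversible n \<pi> A"
    and op: "pi_op_norm_le n \<pi> (A - Pi_mat n \<pi>) c"
  shows "frob_sq n \<pi> (A ^\<^sub>m Suc k - Pi_mat n \<pi>) \<le> c ^ (2 * k) * frob_sq n \<pi> (A - Pi_mat n \<pi>)"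
proof (induction k)
  case 0
  have "A \<in> carrier_mat n n"
    using A unfolding transition_mat_def by simp
  then show ?case by simp
next
  case (Suc k)
  have Ac: "A \<in> carrier_mat n n" and \<pi>_pos: "\<forall>i<n. 0 < \<pi> $ i"
    using A \<pi> unfolding transition_mat_def prob_vec_def by simp_all
  have "frob_sq n \<pi> (A ^\<^sub>m Suc (Suc k) - Pi_mat n \<pi>)
      = frob_sq n \<pi> ((A - Pi_mat n \<pi>) * (A ^\<^sub>m Suc k - Pi_mat n \<pi>))"
    by (simp only: pow_Suc_minus_Pi_mat[OF \<pi> A])
  also have "\<dots> \<le> c\<^sup>2 * frob_sq n \<pi> (A ^\<^sub>m Suc k - Pi_mat n \<pi>)"
    by (rule frob_sq_mult_le[OF minus_carrier_mat minus_carrier_mat \<pi>_pos op]) simp_all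
  also have "\<dots> \<le> c\<^sup>2 * (c ^ (2 * k) * frob_sq n \<pi> (A - Pi_mat n \<pi>))"
    using Suc by (intro mult_left_mono) simp_all
  also have "\<dots> = c ^ (2 * Suc k) * frob_sq n \<pi> (A - Pi_mat n \<pi>)"
    by (simp add: power_add power_mult power2_eq_square)
  finally show ?case .
qed

theorem proposition4p11:
  fixes n :: nat and \<pi> :: "real vec" and P :: "real mat" and Q :: "nat set set"
    and l :: nat and \<alpha> :: real
  assumes "prob_vec n \<pi>"
    and "transition_mat n P"
    and "reversible n \<pi> P"
    and "partition_on {0..<n} Q"
    and "l \<ge> 2"
    and "0 < \<alpha>" and "\<alpha> < 1"
  shows "let A = \<alpha> \<cdot>\<^sub>m P + (1 - \<alpha>) \<cdot>\<^sub>m gibbs_kernel n \<pi> Q in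
         frob_sq n \<pi> (A ^\<^sub>m l - Pi_mat n \<pi>)
           \<le> (1 - \<alpha> * abs_spectral_gap n P) ^ (2 * (l - 1)) * frob_sq n \<pi> (A - Pi_mat n \<pi>)"
proof -
  note \<pi> = assms(1) and P = assms(2,3) and \<alpha> = assms(6,7)[THEN less_imp_le]
  define G where "G = gibbs_kernel n \<pi> Q"
  define A where "A = \<alpha> \<cdot>\<^sub>m P + (1 - \<alpha>) \<cdot>\<^sub>m G"
  have G: "transition_mat n G" "reversible n \<pi> G"
    unfolding G_def using gibbs_kernel_transition_mat[OF \<pi> assms(4)] gibbs_kernel_reversible[OF assms(4)] .
  have Pc: "P \<in> carrier_mat n n" and Gc: "G \<in> carrier_mat n n"
    using P G unfolding transition_mat_def by simp_all
  have A: "transition_mat n A" "reversible n \<pi> A"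
    unfolding A_def using P G Pc Gc \<alpha>
    by (simp_all add: transition_mat_convex_comb reversible_add reversible_smult)
  have "pi_op_norm_le n \<pi> (A - Pi_mat n \<pi>) (\<alpha> * (1 - abs_spectral_gap n P) + (1 - \<alpha>) * 1)"
    unfolding A_def using Pc Gc \<alpha>
    by (intro pi_op_norm_le_convex_comb_minus_Pi_mat pi_op_norm_le_minus_Pi_mat_gap[OF \<pi> P]
        pi_op_norm_le_minus_Pi_mat[OF \<pi> G]) simp_all
  then have "frob_sq n \<pi> (A ^\<^sub>m Suc (l - 1) - Pi_mat n \<pi>)
      \<le> (1 - \<alpha> * abs_spectral_gap n P) ^ (2 * (l - 1)) * frob_sq n \<pi> (A - Pi_mat n \<pi>)"
    by (intro frob_sq_pow_minus_Pi_mat_le[OF \<pi> A]) (simp add: algebra_simps)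
  then show ?thesis
    using assms(5) unfolding A_def G_def Let_def by (simp add: Suc_diff_1)
qed

end
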